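(* Let $L>0$. There is no function $\theta\in C^3([-L,L])$, $\theta\not\equiv0$, solving the third-order ODE $$\tfrac13\,\theta=\theta^{3}\bigl(\theta'''+\theta\bigr)\quad\text{on }(-L,L)$$ with $\theta(-L)=\theta(L)=0$.
   Context: This is the profile equation for separable blow-up solutions $u=(T-t)^{-1/3}\theta(x)$ of the nonlinear dispersion equation $u_t=u^3(u_{xxx}+u)$. For a non-vanishing solution one has the identity $-\tfrac{1}{3\theta}=\theta'\theta''-\int(\theta'')^2\,dx+\tfrac12\theta^2$ (up to an additive constant), where $\int(\theta'')^2dx$ denotes an antiderivative. *)

theory Defs
  imports "HOL-Analysis.Analysis"
begin

definition C3_on_interval ::
  "real \<Rightarrow> real \<Rightarrow> (real \<Rightarrow> real) \<Rightarrow> (real \<Rightarrow> real) \<Rightarrow> (real \<Rightarrow> real) \<Rightarrow> (real \<Rightarrow> real) \<Rightarrow> bool"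
  where "C3_on_interval a b f d1 d2 d3 \<longleftrightarrow>
     (\<forall>x\<in>{a..b}. (f has_real_derivative d1 x) (at x within {a..b})
                \<and> (d1 has_real_derivative d2 x) (at x within {a..b})
                \<and> (d2 has_real_derivative d3 x) (at x within {a..b}))
     \<and> continuous_on {a..b} d3"

end

theory Submission
  imports Defs
begin

(* Idea: wherever theta(x) is nonzero the equation can be divided by theta(x), giving
   theta(x)^2 (theta'''(x) + theta(x)) = 1/3.  Since theta''' is continuous on the compact
   interval it is bounded by some B, so the left-hand side is at most e^2 (B + 1) whenever
   |theta(x)| <= e <= 1.  On the other hand, theta is continuous, vanishes at the endpoints
   and is nonzero somewhere, so by the intermediate value theorem every sufficiently small
   level e > 0 is attained by |theta| at an interior point.  Choosing e with
   e^2 (B + 1) < 1/3 gives a contradiction. *)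

lemma C3_on_interval_continuous:
  assumes "C3_on_interval a b f d1 d2 d3"
  shows "continuous_on {a..b} f"
  using assms unfolding C3_on_interval_def
  by (auto simp: continuous_on_eq_continuous_within intro: DERIV_continuous)

lemma C3_on_interval_third_bounded:
  assumes "C3_on_interval a b f d1 d2 d3"
  obtains B where "B > 0" "\<And>x. x \<in> {a..b} \<Longrightarrow> \<bar>d3 x\<bar> \<le> B"
proof -
  have "bounded (d3 ` {a..b})"
    using assms unfolding C3_on_interval_def
    by (intro compact_imp_bounded compact_continuous_image) auto
  then obtain B where "B > 0" "\<forall>y\<in>d3 ` {a..b}. norm y \<le> B"
    using bounded_pos by blast
  then show ?thesis using that by auto
qed

lemma small_level_attained_inside:
  fixes f :: "real \<Rightarrow> real"
  assumes cont: "continuous_on {a..b} f" and fa: "f a = 0" and fb: "f b = 0"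
    and x0: "x0 \<in> {a..b}" and e: "0 < e" "e \<le> \<bar>f x0\<bar>"
  obtains x where "x \<in> {a<..<b}" "\<bar>f x\<bar> = e"
proof -
  have "continuous_on {x0..b} (\<lambda>x. \<bar>f x\<bar>)"
    using x0 by (intro continuous_intros continuous_on_subset[OF cont]) auto
  then obtain x where x: "x0 \<le> x" "x \<le> b" "\<bar>f x\<bar> = e"
    using IVT2'[of "\<lambda>x. \<bar>f x\<bar>" b e x0] e fb x0 by auto
  have "x \<noteq> a" "x \<noteq> b" using x fa fb e by auto
  with x x0 have "x \<in> {a<..<b}" by auto
  with x show ?thesis using that by blast
qed

lemma profile_equation_nonzero:
  fixes t d :: real
  assumes "t \<noteq> 0" and "t / 3 = t ^ 3 * (d + t)"
  shows "t ^ 2 * (d + t) = 1 / 3"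
proof -
  have "t * (1 / 3) = t * (t ^ 2 * (d + t))"
    using assms(2) by (simp add: power2_eq_square power3_eq_cube algebra_simps)
  then show ?thesis using assms(1) by (metis mult_left_cancel)
qed

lemma cubic_term_bound:
  fixes t d e B :: real
  assumes "\<bar>t\<bar> \<le> e" "e \<le> 1" "\<bar>d\<bar> \<le> B"
  shows "t ^ 2 * (d + t) \<le> e ^ 2 * (B + 1)"
proof -
  have "\<bar>d + t\<bar> \<le> B + 1" using assms by linarith
  moreover have "t ^ 2 \<le> e ^ 2" using assms(1) by (metis abs_ge_zero abs_le_square_iff order.trans power2_abs
      power_mono)
  ultimately have "\<bar>t ^ 2 * (d + t)\<bar> \<le> e ^ 2 * (B + 1)"
    by (simp add: abs_mult mult_mono)
  then show ?thesis by linarith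
qed

lemma small_level_exists:
  fixes B c :: real
  assumes "B > 0" "c > 0"
  obtains e where "0 < e" "e \<le> c" "e \<le> 1" "e ^ 2 * (B + 1) < 1 / 3"
proof -
  define e where "e = min c (1 / (2 * (B + 1)))"
  have e0: "0 < e" and ec: "e \<le> c" and eB: "e * (B + 1) \<le> 1 / 2"
    using assms by (auto simp: e_def field_simps min_def)
  have "e \<le> e * (B + 1)" using e0 assms by simp
  with eB have e1: "e \<le> 1 / 2" by linarith
  have "e ^ 2 * (B + 1) = e * (e * (B + 1))" by (simp add: power2_eq_square)
  also have "\<dots> \<le> e * (1 / 2)" using eB e0 by (intro mult_left_mono) auto
  also have "\<dots> < 1 / 3" using e1 by simp
  finally show ?thesis using that e0 ec e1 by simp
qed

theorem mainTheorem3: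
  fixes L :: real
  assumes "L > 0"
  shows "\<not> (\<exists>\<theta> d1 d2 d3.
            C3_on_interval (-L) L \<theta> d1 d2 d3
          \<and> (\<exists>x\<in>{-L..L}. \<theta> x \<noteq> 0)
          \<and> (\<forall>x\<in>{-L<..<L}. \<theta> x / 3 = \<theta> x ^ 3 * (d3 x + \<theta> x))
          \<and> \<theta> (-L) = 0 \<and> \<theta> L = 0)"
proof
  assume "\<exists>\<theta> d1 d2 d3.
            C3_on_interval (-L) L \<theta> d1 d2 d3
          \<and> (\<exists>x\<in>{-L..L}. \<theta> x \<noteq> 0)
          \<and> (\<forall>x\<in>{-L<..<L}. \<theta> x / 3 = \<theta> x ^ 3 * (d3 x + \<theta> x))
          \<and> \<theta> (-L) = 0 \<and> \<theta> L = 0"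
  then obtain \<theta> d1 d2 d3 x0 where C: "C3_on_interval (-L) L \<theta> d1 d2 d3"
    and x0: "x0 \<in> {-L..L}" "\<theta> x0 \<noteq> 0"
    and ode: "\<forall>x\<in>{-L<..<L}. \<theta> x / 3 = \<theta> x ^ 3 * (d3 x + \<theta> x)"
    and boundary: "\<theta> (-L) = 0" "\<theta> L = 0" by blast
  obtain B where B: "B > 0" "\<And>x. x \<in> {-L..L} \<Longrightarrow> \<bar>d3 x\<bar> \<le> B"
    using C3_on_interval_third_bounded[OF C] by blast
  obtain e where e: "0 < e" "e \<le> \<bar>\<theta> x0\<bar>" "e \<le> 1" "e ^ 2 * (B + 1) < 1 / 3"
    using small_level_exists[of B "\<bar>\<theta> x0\<bar>"] B x0 by auto
  obtain x where x: "x \<in> {-L<..<L}" "\<bar>\<theta> x\<bar> = e"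
    using small_level_attained_inside[OF C3_on_interval_continuous[OF C] boundary x0(1) e(1,2)]
    by blast
  have "\<theta> x ^ 2 * (d3 x + \<theta> x) = 1 / 3"
    using profile_equation_nonzero x e(1) ode by auto
  moreover have "\<theta> x ^ 2 * (d3 x + \<theta> x) \<le> e ^ 2 * (B + 1)"
    using cubic_term_bound x e(3) B(2) by auto
  ultimately show False using e(4) by linarith
qed

end
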